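(* Assume that the support $S$ of $\mu$ is bounded with diameter $D>0$ and that for all $x\in S$ and $\varepsilon\in(0,D]$, $\mu(\mathcal{B}(x,\varepsilon))\geq\rho\varepsilon^d$ for some $\rho>0$. Let $X_1,\dots,X_N$ be i.i.d. with law $\mu$. Then for all $x\in S$ and all $i\in\{1,\dots,N\}$, \[ \mathbb{E}\left[D_{(i)}(x)\right]\leq 2\left(\frac{i}{\rho(N+1)}\right)^{1/d}. \]
   Context: $\mu$ is a probability measure on $\mathbb{R}^d$, $d\geq1$; $\mathcal{B}(x,\varepsilon)$ is the closed Euclidean ball of center $x$ and radius $\varepsilon$. For $x\in\mathbb{R}^d$, $D_{(i)}(x)=\|X_{(i)}(x)-x\|$ denotes the $i$-th smallest of the distances $\|X_1-x\|,\dots,\|X_N-x\|$ (the distance from $x$ to its $i$-th nearest neighbor among $X_1,\dots,X_N$). *)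

theory Defs
  imports "HOL-Probability.Probability"
begin

definition measure_support :: "'a::metric_space measure \<Rightarrow> 'a set" where
  "measure_support \<mu> = {x. \<forall>e>0. emeasure \<mu> (ball x e) > 0}"

definition knn_dist ::
  "(nat \<Rightarrow> 'w \<Rightarrow> 'a::real_normed_vector) \<Rightarrow> nat \<Rightarrow> 'a \<Rightarrow> nat \<Rightarrow> 'w \<Rightarrow> real" where
  "knn_dist X N x i w = sort (map (\<lambda>j. norm (X j w - x)) [1..<N+1]) ! (i - 1)"

end

theory Submission
  imports Defs
begin

text \<open>
  Fix x in the support and write t for the distance from x to its i-th nearest sample point.
  Every y with |y - x| < t has fewer than i sample points at least as close to x as itself,
  so the ball B(x, t) lies in the set R of such y.  Almost surely all sample points lie in the
  support, so t is at most its diameter and the growth condition at radius t/2 gives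
  \<rho> t^d \<le> 2^d \<mu>(R).

  Adding an independent (N+1)-th sample point, E \<mu>(R) becomes the probability that this point
  has fewer than i of the other points at least as close to x.  By exchangeability all N+1
  points have the same such probability, while for every configuration at most i of them have
  the property (the farthest of them has all the others at least as close); hence
  E \<mu>(R) \<le> i/(N+1).  Jensen's inequality for the convex map t \<mapsto> t^d, used in the form of
  the tangent-line bound t \<le> \<beta>(1 - 1/d) + \<beta>^(1-d) t^d / d at \<beta> = (2^d i / (\<rho>(N+1)))^(1/d),
  turns E t^d \<le> 2^d i / (\<rho>(N+1)) into the claimed bound on E t.
\<close>

definition closer_count ::
  "'a::real_normed_vector \<Rightarrow> (nat \<Rightarrow> 'a) \<Rightarrow> nat set \<Rightarrow> 'a \<Rightarrow> nat" where
  "closer_count x z J y = card {j\<in>J. norm (z j - x) \<le> norm (y - x)}"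

lemma closer_count_cong:
  "(\<And>j. j \<in> J \<Longrightarrow> z j = z' j) \<Longrightarrow> closer_count x z J y = closer_count x z' J y"
  unfolding closer_count_def by (auto intro!: arg_cong[where f=card])

lemma closer_count_reindex:
  assumes "bij_betw \<sigma> J K"
  shows "closer_count x (z \<circ> \<sigma>) J y = closer_count x z K y"
proof -
  have "bij_betw \<sigma> {j\<in>J. norm (z (\<sigma> j) - x) \<le> norm (y - x)} {k\<in>K. norm (z k - x) \<le> norm (y - x)}"
    using assms by (auto simp: bij_betw_def inj_on_def image_iff)
  then show ?thesis
    unfolding closer_count_def by (simp add: bij_betw_same_card)
qed

lemma card_low_rank_le:
  fixes r :: "'i \<Rightarrow> 'b::linorder"
  assumes "finite I"
  shows "card {m\<in>I. card {j\<in>I - {m}. r j \<le> r m} < i} \<le> i"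
proof -
  define T where "T = {m\<in>I. card {j\<in>I - {m}. r j \<le> r m} < i}"
  have "finite T" unfolding T_def using assms by simp
  have "card T \<le> i"
  proof (cases "T = {}")
    case False
    then have "Max (r ` T) \<in> r ` T" using \<open>finite T\<close> by simp
    then obtain m where m: "m \<in> T" "r m = Max (r ` T)" by auto
    then have "r k \<le> r m" if "k \<in> T" for k using \<open>finite T\<close> that by simp
    then have "card (T - {m}) \<le> card {j\<in>I - {m}. r j \<le> r m}"
      using assms by (intro card_mono) (auto simp: T_def)
    also have "\<dots> < i" using m(1) by (simp add: T_def)
    finally show ?thesis using m(1) \<open>finite T\<close> by (simp add: card_Diff_singleton)
  qed simp
  then show ?thesis unfolding T_def .
qed

lemma length_filter_le_less_sort_nth:
  fixes L :: "'b::linorder list"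
  assumes "k < length L" "r < sort L ! k"
  shows "length (filter (\<lambda>v. v \<le> r) L) \<le> k"
proof -
  let ?s = "sort L"
  have "length (filter (\<lambda>v. v \<le> r) L) = length (filter (\<lambda>v. v \<le> r) ?s)"
    by (simp add: filter_sort)
  also have "\<dots> = card {l. l < length ?s \<and> ?s ! l \<le> r}"
    by (simp add: length_filter_conv_card)
  also have "\<dots> \<le> card {..<k}"
  proof (rule card_mono)
    show "{l. l < length ?s \<and> ?s ! l \<le> r} \<subseteq> {..<k}"
    proof
      fix l assume l: "l \<in> {l. l < length ?s \<and> ?s ! l \<le> r}"
      show "l \<in> {..<k}"
      proof (rule ccontr)
        assume "l \<notin> {..<k}"
        then have "?s ! k \<le> ?s ! l" using l by (intro sorted_nth_mono) auto
        then show False using l assms by auto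
      qed
    qed
  qed simp
  finally show ?thesis by simp
qed

lemma knn_dist_in_distances:
  assumes "1 \<le> i" "i \<le> N"
  shows "\<exists>j\<in>{1..N}. knn_dist X N x i w = norm (X j w - x)"
proof -
  let ?L = "map (\<lambda>j. norm (X j w - x)) [1..<N+1]"
  have "sort ?L ! (i - 1) \<in> set (sort ?L)" using assms by (intro nth_mem) simp
  then show ?thesis unfolding knn_dist_def by auto
qed

lemma knn_dist_nonneg:
  assumes "1 \<le> i" "i \<le> N"
  shows "0 \<le> knn_dist X N x i w"
proof -
  obtain j where "knn_dist X N x i w = norm (X j w - x)"
    using knn_dist_in_distances[OF assms, where X=X and x=x and w=w] by blast
  then show ?thesis by simp
qed

lemma ball_knn_dist_subset:
  assumes "1 \<le> i" "i \<le> N"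
  shows "ball x (knn_dist X N x i w) \<subseteq> {y. closer_count x (\<lambda>j. X j w) {1..N} y < i}"
proof
  fix y assume "y \<in> ball x (knn_dist X N x i w)"
  then have y: "norm (y - x) < knn_dist X N x i w"
    by (simp add: dist_norm norm_minus_commute)
  let ?L = "map (\<lambda>j. norm (X j w - x)) [1..<N+1]"
  let ?P = "\<lambda>j. norm (X j w - x) \<le> norm (y - x)"
  have "closer_count x (\<lambda>j. X j w) {1..N} y = card ({j. ?P j} \<inter> set [1..<N+1])"
    unfolding closer_count_def by (auto intro!: arg_cong[where f=card])
  also have "\<dots> = length (filter ?P [1..<N+1])"
    by (rule distinct_length_filter[symmetric]) simp
  also have "\<dots> = length (filter (\<lambda>v. v \<le> norm (y - x)) ?L)"
    by (simp add: filter_map comp_def)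
  also have "\<dots> \<le> i - 1"
    using assms y by (intro length_filter_le_less_sort_nth) (auto simp: knn_dist_def)
  finally show "y \<in> {y. closer_count x (\<lambda>j. X j w) {1..N} y < i}" using assms by simp
qed

lemma borel_measurable_closer_count:
  fixes z :: "'b \<Rightarrow> nat \<Rightarrow> 'a::{real_normed_vector, second_countable_topology}"
  assumes "finite J" "\<And>j. j \<in> J \<Longrightarrow> (\<lambda>\<omega>. z \<omega> j) \<in> borel_measurable M"
    and "y \<in> borel_measurable M"
  shows "(\<lambda>\<omega>. real (closer_count x (z \<omega>) J (y \<omega>))) \<in> borel_measurable M"
proof -
  have eq: "real (closer_count x (z \<omega>) J (y \<omega>))
      = (\<Sum>j\<in>J. if norm (z \<omega> j - x) \<le> norm (y \<omega> - x) then 1 else 0)" for \<omega>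
    using assms(1) by (simp add: closer_count_def sum.If_cases Int_def conj_commute)
  have "(\<lambda>\<omega>. if norm (z \<omega> j - x) \<le> norm (y \<omega> - x) then 1 else 0 :: real) \<in> borel_measurable M"
    if "j \<in> J" for j
    using assms(2)[OF that] assms(3) by measurable
  then show ?thesis unfolding eq by (rule borel_measurable_sum)
qed

lemma sets_closer_count_less:
  fixes z :: "'b \<Rightarrow> nat \<Rightarrow> 'a::{real_normed_vector, second_countable_topology}"
  assumes "finite J" "\<And>j. j \<in> J \<Longrightarrow> (\<lambda>\<omega>. z \<omega> j) \<in> borel_measurable M"
    and "y \<in> borel_measurable M"
  shows "{\<omega> \<in> space M. closer_count x (z \<omega>) J (y \<omega>) < i} \<in> sets M"
  using borel_measurable_less[OF borel_measurable_closer_count[OF assms] borel_measurable_const[of "real i"]]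
  by simp

lemma sets_borel_closer_count_less:
  fixes z :: "nat \<Rightarrow> 'a::{real_normed_vector, second_countable_topology}"
  assumes "finite J"
  shows "{y. closer_count x z J y < i} \<in> sets borel"
  using sets_closer_count_less[of J "\<lambda>_. z" borel "\<lambda>y. y" x i, OF assms borel_measurable_const
      measurable_ident_sets[OF refl]]
  by simp

lemma borel_measurable_emeasure_closer_count:
  fixes \<mu> :: "'a::{real_normed_vector, second_countable_topology} measure"
  assumes "sigma_finite_measure \<mu>" "sets \<mu> = sets borel"
    and "finite J" "\<And>j. j \<in> J \<Longrightarrow> X j \<in> borel_measurable M"
  shows "(\<lambda>w. emeasure \<mu> {y. closer_count x (\<lambda>j. X j w) J y < i}) \<in> borel_measurable M"
proof -
  define A where "A = {p \<in> space (M \<Otimes>\<^sub>M \<mu>). closer_count x (\<lambda>j. X j (fst p)) J (snd p) < i}"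
  have "snd \<in> borel_measurable (M \<Otimes>\<^sub>M \<mu>)"
    using measurable_snd[of M \<mu>] unfolding measurable_cong_sets[OF refl assms(2)] .
  then have "A \<in> sets (M \<Otimes>\<^sub>M \<mu>)"
    unfolding A_def using assms(3,4) by (intro sets_closer_count_less) auto
  then have "(\<lambda>w. emeasure \<mu> (Pair w -` A)) \<in> borel_measurable M"
    by (rule sigma_finite_measure.measurable_emeasure_Pair[OF assms(1)])
  moreover have "Pair w -` A = {y. closer_count x (\<lambda>j. X j w) J y < i}" if "w \<in> space M" for w
    using that sets_eq_imp_space_eq[OF assms(2)] by (auto simp: A_def space_pair_measure)
  ultimately show ?thesis by (simp cong: measurable_cong)
qed

lemma AE_measure_support:
  fixes \<mu> :: "'a::{metric_space, second_countable_topology} measure"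
  assumes "sets \<mu> = sets borel"
  shows "AE y in \<mu>. y \<in> measure_support \<mu>"
proof -
  define F where "F = {ball y e | y e. e > 0 \<and> emeasure \<mu> (ball y e) = 0}"
  obtain F' where F': "F' \<subseteq> F" "countable F'" "\<Union>F' = \<Union>F"
    using Lindelof[of F] unfolding F_def by auto
  have "(\<Union>S\<in>F'. S) \<in> null_sets \<mu>"
    using F' by (intro null_sets_UN') (auto simp: F_def null_sets_def assms)
  moreover have "{y \<in> space \<mu>. y \<notin> measure_support \<mu>} \<subseteq> \<Union>F'"
  proof
    fix y assume "y \<in> {y \<in> space \<mu>. y \<notin> measure_support \<mu>}"
    then obtain e where "e > 0" "emeasure \<mu> (ball y e) = 0"
      unfolding measure_support_def by (auto simp: not_less)
    then show "y \<in> \<Union>F'" unfolding F' F_def by force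
  qed
  ultimately show ?thesis by (auto intro: AE_I')
qed

lemma AE_distr_in_measure_support:
  fixes X :: "'w \<Rightarrow> 'a::{metric_space, second_countable_topology}"
  assumes "sets \<mu> = sets borel" "X \<in> borel_measurable M" "distr M borel X = \<mu>"
  shows "AE w in M. X w \<in> measure_support \<mu>"
proof (rule AE_distrD[OF assms(2)])
  show "AE y in distr M borel X. y \<in> measure_support \<mu>"
    unfolding assms(3) by (rule AE_measure_support[OF assms(1)])
qed

lemma emeasure_PiM_closer_count_exchangeable:
  fixes \<mu> :: "'a::{real_normed_vector, second_countable_topology} measure"
  assumes \<mu>: "prob_space \<mu>" "sets \<mu> = sets borel" and I: "finite I" "m \<in> I" "n \<in> I"
  defines "P \<equiv> PiM I (\<lambda>_. \<mu>)"
  shows "emeasure P {\<omega> \<in> space P. closer_count x \<omega> (I - {n}) (\<omega> n) < i}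
    = emeasure P {\<omega> \<in> space P. closer_count x \<omega> (I - {m}) (\<omega> m) < i}"
proof -
  define E where "E k = {\<omega> \<in> space P. closer_count x \<omega> (I - {k}) (\<omega> k) < i}" for k
  define \<sigma> where "\<sigma> = Transposition.transpose m n"
  define T where "T \<omega> = (\<lambda>k\<in>I. \<omega> (\<sigma> k))" for \<omega> :: "nat \<Rightarrow> 'a"
  have \<sigma>_I: "\<sigma> \<in> I \<rightarrow> I" "inj_on \<sigma> I"
    using I by (auto simp: \<sigma>_def Transposition.transpose_def)
  have distr_T: "distr P P T = P"
    unfolding P_def T_def using distr_PiM_reindex[of I "\<lambda>_. \<mu>" \<sigma> I] \<mu> \<sigma>_I by simp
  have T_meas: "T \<in> measurable P P"
    unfolding T_def P_def using \<sigma>_I by (intro measurable_restrict measurable_component_singleton) auto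
  have "\<sigma> ` (I - {m}) = I - {n}"
    using I unfolding \<sigma>_def by (simp add: image_set_diff inj_transpose)
  then have "bij_betw \<sigma> (I - {m}) (I - {n})"
    unfolding \<sigma>_def by (intro bij_betw_imageI) simp_all
  then have "closer_count x (\<omega> \<circ> \<sigma>) (I - {m}) y = closer_count x \<omega> (I - {n}) y" for \<omega> y
    by (rule closer_count_reindex)
  moreover have "closer_count x (T \<omega>) (I - {m}) y = closer_count x (\<omega> \<circ> \<sigma>) (I - {m}) y" for \<omega> y
    by (rule closer_count_cong) (simp add: T_def)
  moreover have "T \<omega> m = \<omega> n" for \<omega>
    using I(2) by (simp add: T_def \<sigma>_def)
  ultimately have "T -` E m \<inter> space P = E n"
    using T_meas by (auto simp: E_def measurable_space)
  moreover have "E m \<in> sets P"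
    unfolding E_def P_def using I(1,2) measurable_component_singleton[of _ I "\<lambda>_. \<mu>"]
    by (intro sets_closer_count_less) (auto simp: measurable_cong_sets[OF refl \<mu>(2)])
  ultimately show ?thesis
    using emeasure_distr[OF T_meas] by (simp add: distr_T E_def)
qed

lemma card_mult_emeasure_low_rank_le:
  fixes \<mu> :: "'a::{real_normed_vector, second_countable_topology} measure"
  assumes \<mu>: "prob_space \<mu>" "sets \<mu> = sets borel" and I: "finite I" "m \<in> I"
  defines "P \<equiv> PiM I (\<lambda>_. \<mu>)"
  shows "of_nat (card I) * emeasure P {\<omega> \<in> space P. closer_count x \<omega> (I - {m}) (\<omega> m) < i}
    \<le> of_nat i"
proof -
  define E where "E n = {\<omega> \<in> space P. closer_count x \<omega> (I - {n}) (\<omega> n) < i}" for n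
  interpret P: prob_space P unfolding P_def using \<mu> by (intro prob_space_PiM) auto
  have E_sets: "E n \<in> sets P" if "n \<in> I" for n
    unfolding E_def P_def using I(1) that measurable_component_singleton[of _ I "\<lambda>_. \<mu>"]
    by (intro sets_closer_count_less) (auto simp: measurable_cong_sets[OF refl \<mu>(2)])
  have "of_nat (card I) * emeasure P (E m) = (\<Sum>n\<in>I. emeasure P (E n))"
    using emeasure_PiM_closer_count_exchangeable[OF \<mu> I] by (simp add: E_def P_def)
  also have "\<dots> = (\<integral>\<^sup>+\<omega>. (\<Sum>n\<in>I. indicator (E n) \<omega>) \<partial>P)"
    using E_sets by (simp add: nn_integral_sum)
  also have "\<dots> \<le> (\<integral>\<^sup>+\<omega>. of_nat i \<partial>P)"
  proof (rule nn_integral_mono)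
    fix \<omega> assume "\<omega> \<in> space P"
    then have "(\<Sum>n\<in>I. indicator (E n) \<omega>)
        = (of_nat (card {n\<in>I. card {j\<in>I - {n}. norm (\<omega> j - x) \<le> norm (\<omega> n - x)} < i}) :: ennreal)"
      using I by (simp add: indicator_def E_def closer_count_def Int_def conj_commute)
    also have "\<dots> \<le> of_nat i"
      using card_low_rank_le[OF I(1), of "\<lambda>j. norm (\<omega> j - x)" i] by simp
    finally show "(\<Sum>n\<in>I. indicator (E n) \<omega>) \<le> (of_nat i :: ennreal)" .
  qed
  also have "\<dots> = of_nat i" by (simp add: P.emeasure_space_1)
  finally show ?thesis unfolding E_def .
qed

lemma nn_integral_indep_vars_eq_PiM:
  fixes X :: "'i \<Rightarrow> 'w \<Rightarrow> 'a::topological_space"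
  assumes "prob_space M" "J \<noteq> {}" "sets \<mu> = sets borel"
    and X: "\<forall>j\<in>J. X j \<in> borel_measurable M" "prob_space.indep_vars M (\<lambda>_. borel) X J"
      "\<forall>j\<in>J. distr M borel (X j) = \<mu>"
    and g: "g \<in> borel_measurable (PiM J (\<lambda>_. \<mu>))"
  shows "(\<integral>\<^sup>+w. g (\<lambda>j\<in>J. X j w) \<partial>M) = (\<integral>\<^sup>+z. g z \<partial>PiM J (\<lambda>_. \<mu>))"
proof -
  have "distr M (PiM J (\<lambda>_. borel)) (\<lambda>w. \<lambda>j\<in>J. X j w) = PiM J (\<lambda>j. distr M borel (X j))"
    using prob_space.indep_vars_iff_distr_eq_PiM'[OF assms(1,2), where M'="\<lambda>_. borel" and X=X] X by auto
  also have "\<dots> = PiM J (\<lambda>_. \<mu>)" using X(3) by (intro PiM_cong) auto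
  finally have distr_X: "distr M (PiM J (\<lambda>_. \<mu>)) (\<lambda>w. \<lambda>j\<in>J. X j w) = PiM J (\<lambda>_. \<mu>)"
    by (simp add: distr_cong[OF refl sets_PiM_cong[OF refl assms(3)] refl])
  have "(\<lambda>w. \<lambda>j\<in>J. X j w) \<in> measurable M (PiM J (\<lambda>_. \<mu>))"
    using X(1) by (intro measurable_restrict) (simp add: measurable_cong_sets[OF refl assms(3)])
  from nn_integral_distr[OF this, of g] show ?thesis using g by (simp add: distr_X)
qed

lemma nn_integral_PiM_emeasure_closer_count:
  fixes \<mu> :: "'a::{real_normed_vector, second_countable_topology} measure"
  assumes \<mu>: "prob_space \<mu>" "sets \<mu> = sets borel" and J: "finite J" "n \<notin> J"
  defines "P \<equiv> PiM (insert n J) (\<lambda>_. \<mu>)"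
  shows "(\<integral>\<^sup>+z. emeasure \<mu> {y. closer_count x z J y < i} \<partial>PiM J (\<lambda>_. \<mu>))
    = emeasure P {\<omega> \<in> space P. closer_count x \<omega> J (\<omega> n) < i}"
proof -
  interpret \<mu>: prob_space \<mu> by (fact \<mu>(1))
  interpret product_sigma_finite "\<lambda>_::nat. \<mu>" ..
  define E where "E = {\<omega> \<in> space P. closer_count x \<omega> J (\<omega> n) < i}"
  have E_sets: "E \<in> sets P"
    unfolding E_def P_def using J(1) measurable_component_singleton[of _ "insert n J" "\<lambda>_. \<mu>"]
    by (intro sets_closer_count_less) (auto simp: measurable_cong_sets[OF refl \<mu>(2)])
  have "(\<integral>\<^sup>+y. indicator E (z(n := y)) \<partial>\<mu>) = emeasure \<mu> {y. closer_count x z J y < i}"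
    if "z \<in> space (PiM J (\<lambda>_. \<mu>))" for z
  proof -
    have "closer_count x (z(n := y)) J y = closer_count x z J y" for y
      using J(2) by (intro closer_count_cong) auto
    then have slice: "indicator E (z(n := y)) = indicator {y. closer_count x z J y < i} y" for y
      using that sets_eq_imp_space_eq[OF \<mu>(2)]
      by (auto simp: E_def P_def space_PiM indicator_def PiE_iff)
    have "(\<integral>\<^sup>+y. indicator E (z(n := y)) \<partial>\<mu>)
        = (\<integral>\<^sup>+y. indicator {y. closer_count x z J y < i} y \<partial>\<mu>)"
      by (rule nn_integral_cong, rule slice)
    also have "\<dots> = emeasure \<mu> {y. closer_count x z J y < i}"
      using sets_borel_closer_count_less[OF J(1)] \<mu>(2) by (intro nn_integral_indicator) simp
    finally show ?thesis .
  qed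
  then have "(\<integral>\<^sup>+z. emeasure \<mu> {y. closer_count x z J y < i} \<partial>PiM J (\<lambda>_. \<mu>))
      = (\<integral>\<^sup>+z. (\<integral>\<^sup>+y. indicator E (z(n := y)) \<partial>\<mu>) \<partial>PiM J (\<lambda>_. \<mu>))"
    by (intro nn_integral_cong) simp
  also have "\<dots> = emeasure P E"
    unfolding P_def using product_nn_integral_insert[OF J, of "indicator E"] E_sets
    by (simp add: P_def)
  finally show ?thesis unfolding E_def .
qed

lemma nn_integral_emeasure_closer_count_le:
  fixes \<mu> :: "'a::{real_normed_vector, second_countable_topology} measure"
    and X :: "nat \<Rightarrow> 'w \<Rightarrow> 'a"
  assumes \<mu>: "prob_space \<mu>" "sets \<mu> = sets borel" and M: "prob_space M"
    and J: "finite J" "J \<noteq> {}"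
    and X: "\<forall>j\<in>J. X j \<in> borel_measurable M" "prob_space.indep_vars M (\<lambda>_. borel) X J"
      "\<forall>j\<in>J. distr M borel (X j) = \<mu>"
  shows "(\<integral>\<^sup>+w. emeasure \<mu> {y. closer_count x (\<lambda>j. X j w) J y < i} \<partial>M)
    \<le> ennreal (real i / real (Suc (card J)))"
proof -
  define g where "g z = emeasure \<mu> {y. closer_count x z J y < i}" for z
  define I where "I = (\<integral>\<^sup>+w. g (\<lambda>j. X j w) \<partial>M)"
  obtain n :: nat where n: "n \<notin> J" using J(1) infinite_UNIV_nat ex_new_if_finite by blast
  have "g \<in> borel_measurable (PiM J (\<lambda>_. \<mu>))"
    unfolding g_def using \<mu> J(1) measurable_component_singleton[of _ J "\<lambda>_. \<mu>"]
    by (intro borel_measurable_emeasure_closer_count)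
      (auto simp: measurable_cong_sets[OF refl \<mu>(2)] prob_space_imp_sigma_finite)
  moreover have "I = (\<integral>\<^sup>+w. g (\<lambda>j\<in>J. X j w) \<partial>M)"
    unfolding I_def g_def by (simp cong: closer_count_cong)
  ultimately have "I = (\<integral>\<^sup>+z. g z \<partial>PiM J (\<lambda>_. \<mu>))"
    using nn_integral_indep_vars_eq_PiM[OF M J(2) \<mu>(2) X] by simp
  then have "of_nat (Suc (card J)) * I \<le> of_nat i"
    using card_mult_emeasure_low_rank_le[OF \<mu>, of "insert n J" n x i] J(1) n
    by (simp add: g_def nn_integral_PiM_emeasure_closer_count[OF \<mu> J(1) n])
  then have "ennreal (1 / Suc (card J)) * (of_nat (Suc (card J)) * I) \<le> ennreal (1 / Suc (card J)) * of_nat i"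
    by (rule mult_left_mono) simp
  then show ?thesis
    unfolding I_def[symmetric] g_def[symmetric]
    by (simp add: mult.assoc[symmetric] ennreal_of_nat_eq_real_of_nat ennreal_mult[symmetric]
        del: of_nat_Suc)
qed

lemma growth_measure_ball_ge:
  fixes \<mu> :: "'a::metric_space measure"
  assumes "finite_measure \<mu>" "sets \<mu> = sets borel" "0 < d" "0 \<le> t" "t \<le> 2 * D"
    and growth: "\<forall>e. 0 < e \<and> e \<le> D \<longrightarrow> \<rho> * e ^ d \<le> measure \<mu> (cball x e)"
  shows "\<rho> * t ^ d \<le> 2 ^ d * measure \<mu> (ball x t)"
proof (cases "t = 0")
  case False
  then have "\<rho> * (t / 2) ^ d \<le> measure \<mu> (cball x (t / 2))"
    using growth assms(4,5) by simp
  also have "\<dots> \<le> measure \<mu> (ball x t)"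
    using False assms(4) by (intro finite_measure.finite_measure_mono[OF assms(1)]) (auto simp: assms(2))
  finally show ?thesis by (simp add: power_divide field_simps)
qed (use assms(3) in \<open>simp add: power_0_left\<close>)

lemma knn_dist_power_le_emeasure_closer_count:
  fixes \<mu> :: "'a::{real_normed_vector, second_countable_topology} measure"
  assumes \<mu>: "finite_measure \<mu>" "sets \<mu> = sets borel" and S: "bounded (measure_support \<mu>)"
    and growth: "\<forall>e. 0 < e \<and> e \<le> diameter (measure_support \<mu>) \<longrightarrow>
      \<rho> * e ^ d \<le> measure \<mu> (cball x e)"
    and \<rho>: "0 < \<rho>" and d: "0 < d" and x: "x \<in> measure_support \<mu>"
    and sample: "\<forall>j\<in>{1..N}. X j w \<in> measure_support \<mu>" and i: "1 \<le> i" "i \<le> N"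
  shows "ennreal (knn_dist X N x i w ^ d)
    \<le> ennreal (2 ^ d / \<rho>) * emeasure \<mu> {y. closer_count x (\<lambda>j. X j w) {1..N} y < i}"
proof -
  let ?t = "knn_dist X N x i w"
  obtain j where j: "j \<in> {1..N}" "?t = norm (X j w - x)"
    using knn_dist_in_distances[OF i, where X=X and x=x and w=w] by blast
  have "dist (X j w) x \<le> diameter (measure_support \<mu>)"
    using j(1) sample x by (intro diameter_bounded_bound[OF S]) auto
  moreover have "0 \<le> diameter (measure_support \<mu>)"
    using diameter_bounded_bound[OF S x x] by simp
  ultimately have "\<rho> * ?t ^ d \<le> 2 ^ d * measure \<mu> (ball x ?t)"
    using j(2) d by (intro growth_measure_ball_ge[OF \<mu> _ _ _ growth]) (auto simp: dist_norm)
  then have "ennreal (?t ^ d) \<le> ennreal (2 ^ d / \<rho>) * ennreal (measure \<mu> (ball x ?t))"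
    using \<rho> by (simp add: ennreal_mult[symmetric] ennreal_leI field_simps)
  also have "ennreal (measure \<mu> (ball x ?t)) = emeasure \<mu> (ball x ?t)"
    using finite_measure.emeasure_eq_measure[OF \<mu>(1)] by simp
  also have "\<dots> \<le> emeasure \<mu> {y. closer_count x (\<lambda>j. X j w) {1..N} y < i}"
    using sets_borel_closer_count_less[of "{1..N}"] \<mu>(2)
    by (intro emeasure_mono[OF ball_knn_dist_subset[OF i]]) simp
  finally show ?thesis by (simp add: mult_left_mono)
qed

lemma tangent_le_power:
  fixes t \<beta> :: real
  assumes "0 < \<beta>" "0 < d" "0 \<le> t"
  shows "t \<le> \<beta> * (1 - 1 / d) + \<beta> / (d * \<beta> ^ d) * t ^ d"
proof -
  have "1 + real d * (t / \<beta> - 1) \<le> (1 + (t / \<beta> - 1)) ^ d"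
    using assms by (intro Bernoulli_inequality) simp
  then have "1 + real d * (t / \<beta> - 1) \<le> t ^ d / \<beta> ^ d"
    by (simp add: power_divide)
  then have "\<beta> / d * (1 + real d * (t / \<beta> - 1)) \<le> \<beta> / d * (t ^ d / \<beta> ^ d)"
    using assms by (intro mult_left_mono) auto
  moreover have "\<beta> / d * (1 + real d * (t / \<beta> - 1)) = t - \<beta> * (1 - 1 / d)"
    using assms by (simp add: field_simps)
  ultimately show ?thesis by simp
qed

lemma nn_integral_le_powr_of_power_bound:
  fixes T :: "'w \<Rightarrow> real" and G :: "'w \<Rightarrow> ennreal"
  assumes "prob_space M" "0 < d" "0 < c" "0 < b"
    and "G \<in> borel_measurable M" "(\<integral>\<^sup>+w. G w \<partial>M) \<le> ennreal b"
    and "AE w in M. 0 \<le> T w \<and> ennreal (T w ^ d) \<le> ennreal c * G w"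
  shows "(\<integral>\<^sup>+w. ennreal (T w) \<partial>M) \<le> ennreal ((c * b) powr (1 / d))"
proof -
  interpret prob_space M by fact
  define \<beta> where "\<beta> = (c * b) powr (1 / d)"
  define a where "a = \<beta> * (1 - 1 / d)"
  define k where "k = \<beta> / (d * \<beta> ^ d)"
  have \<beta>: "0 < \<beta>" "\<beta> ^ d = c * b"
    using assms(2-4) by (auto simp: \<beta>_def powr_realpow[symmetric] powr_powr)
  have a: "0 \<le> a" using \<beta> assms(2) by (simp add: a_def field_simps)
  have k: "0 \<le> k" "a + k * c * b = \<beta>" using \<beta> assms(2-4) by (auto simp: a_def k_def field_simps)
  have "AE w in M. ennreal (T w) \<le> ennreal a + ennreal (k * c) * G w"
    using assms(7)
  proof eventually_elim
    case (elim w)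
    then have "ennreal (T w) \<le> ennreal (a + k * T w ^ d)"
      using tangent_le_power[OF \<beta>(1) assms(2)] by (intro ennreal_leI) (simp add: a_def k_def)
    also have "\<dots> = ennreal a + ennreal k * ennreal (T w ^ d)"
      using a k elim by (simp add: ennreal_plus ennreal_mult)
    also have "\<dots> \<le> ennreal a + ennreal k * (ennreal c * G w)"
      using elim by (intro add_left_mono mult_left_mono) auto
    finally show ?case
      using k assms(3) by (simp add: ennreal_mult mult.assoc)
  qed
  then have "(\<integral>\<^sup>+w. ennreal (T w) \<partial>M) \<le> (\<integral>\<^sup>+w. ennreal a + ennreal (k * c) * G w \<partial>M)"
    by (rule nn_integral_mono_AE)
  also have "\<dots> = ennreal a + ennreal (k * c) * (\<integral>\<^sup>+w. G w \<partial>M)"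
    using assms(5) by (simp add: nn_integral_add nn_integral_cmult emeasure_space_1)
  also have "\<dots> \<le> ennreal a + ennreal (k * c) * ennreal b"
    using assms(6) by (intro add_left_mono mult_left_mono) auto
  also have "\<dots> = ennreal \<beta>"
    using a k assms(3,4) by (simp add: ennreal_plus[symmetric] ennreal_mult[symmetric])
  finally show ?thesis unfolding \<beta>_def .
qed

lemma powr_inverse_power_mult:
  fixes a c :: real
  assumes "0 \<le> a" "0 < c" "0 < d"
  shows "(c ^ d * a) powr (1 / d) = c * a powr (1 / d)"
proof -
  have "(c ^ d) powr (1 / d) = c"
    using assms(2,3) by (simp add: powr_realpow[symmetric] powr_powr)
  then show ?thesis using assms by (simp add: powr_mult)
qed

theorem lemma3p1:
  fixes \<mu> :: "'a::euclidean_space measure"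
    and M :: "'w measure"
    and X :: "nat \<Rightarrow> 'w \<Rightarrow> 'a"
    and N :: nat and \<rho> :: real
  assumes "prob_space \<mu>" and "sets \<mu> = sets borel"
    and "bounded (measure_support \<mu>)"
    and "diameter (measure_support \<mu>) > 0"
    and "\<rho> > 0"
    and "\<forall>x\<in>measure_support \<mu>. \<forall>e. 0 < e \<and> e \<le> diameter (measure_support \<mu>) \<longrightarrow>
           measure \<mu> (cball x e) \<ge> \<rho> * e ^ DIM('a)"
    and "prob_space M"
    and "\<forall>j\<in>{1..N}. X j \<in> borel_measurable M"
    and "prob_space.indep_vars M (\<lambda>_. borel) X {1..N}"
    and "\<forall>j\<in>{1..N}. distr M borel (X j) = \<mu>"
  shows "\<forall>x\<in>measure_support \<mu>. \<forall>i\<in>{1..N}.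
           (\<integral>\<^sup>+ w. ennreal (knn_dist X N x i w) \<partial>M)
             \<le> ennreal (2 * (real i / (\<rho> * real (N + 1))) powr (1 / real DIM('a)))"
proof (intro ballI)
  fix x i assume x: "x \<in> measure_support \<mu>" and i: "i \<in> {1..N}"
  interpret \<mu>: prob_space \<mu> by fact
  define F where "F w = emeasure \<mu> {y. closer_count x (\<lambda>j. X j w) {1..N} y < i}" for w
  have F_meas: "F \<in> borel_measurable M"
    unfolding F_def using assms(2,8) prob_space_imp_sigma_finite[OF assms(1)]
    by (intro borel_measurable_emeasure_closer_count) auto
  have F_int: "(\<integral>\<^sup>+w. F w \<partial>M) \<le> ennreal (real i / real (Suc N))"
    unfolding F_def using nn_integral_emeasure_closer_count_le[OF assms(1,2,7) _ _ assms(8-10)] i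
    by simp
  have "AE w in M. \<forall>j\<in>{1..N}. X j w \<in> measure_support \<mu>"
    unfolding AE_finite_all[OF finite_atLeastAtMost]
    using AE_distr_in_measure_support[OF assms(2)] assms(8,10) by blast
  then have "AE w in M. 0 \<le> knn_dist X N x i w
      \<and> ennreal (knn_dist X N x i w ^ DIM('a)) \<le> ennreal (2 ^ DIM('a) / \<rho>) * F w"
    unfolding F_def using i knn_dist_nonneg knn_dist_power_le_emeasure_closer_count[OF
      \<mu>.finite_measure_axioms assms(2,3) bspec[OF assms(6) x] assms(5) DIM_positive[where 'a='a] x]
    by (auto elim!: eventually_mono)
  then have "(\<integral>\<^sup>+w. ennreal (knn_dist X N x i w) \<partial>M)
      \<le> ennreal ((2 ^ DIM('a) / \<rho> * (real i / real (Suc N))) powr (1 / DIM('a)))"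
    using i assms(5)
    by (intro nn_integral_le_powr_of_power_bound[OF assms(7) DIM_positive _ _ F_meas F_int]) auto
  also have "(2 ^ DIM('a) / \<rho> * (real i / real (Suc N))) powr (1 / DIM('a))
      = 2 * (real i / (\<rho> * real (N + 1))) powr (1 / real DIM('a))"
    using assms(5) by (simp add: powr_inverse_power_mult[symmetric] field_simps)
  finally show "(\<integral>\<^sup>+ w. ennreal (knn_dist X N x i w) \<partial>M)
      \<le> ennreal (2 * (real i / (\<rho> * real (N + 1))) powr (1 / real DIM('a)))" .
qed

end
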